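(* Let $G$ be a nontrivial finite abelian $p$-group ($p$ any prime). Then $G$ has a unique minimal nontrivial characteristic subgroup (i.e. the set of nontrivial characteristic subgroups of $G$ has a least element under inclusion). *)

theory Defs
  imports "HOL-Algebra.Algebra"
begin

definition characteristic_subgroup :: "'a set \<Rightarrow> ('a, 'b) monoid_scheme \<Rightarrow> bool" where
  "characteristic_subgroup H G \<longleftrightarrow>
     subgroup H G \<and> (\<forall>\<phi> \<in> iso G G. \<phi> ` H = H)"

end

theory Submission
  imports Defs "HOL-Number_Theory.Cong"
begin

text \<open>
  Let \<open>p ^ e\<close> be the exponent of \<open>G\<close> and \<open>t = p ^ (e - 1)\<close>. The subgroup of \<open>t\<close>-th powers
  is characteristic and nontrivial, and it lies in every nontrivial characteristic subgroup \<open>K\<close>.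
  Take \<open>z \<in> K\<close> of order \<open>p\<close> and \<open>u\<close> with \<open>u ^ t \<noteq> 1\<close>, so that \<open>u\<close> has order \<open>p ^ e\<close>.
  If \<open>z\<close> is a power of \<open>u\<close>, it generates the subgroup of order \<open>p\<close> of \<open>\<langle>u\<rangle>\<close>, which
  contains \<open>u ^ t\<close>. Otherwise, since homomorphisms into \<open>\<int>/p^e\<close> extend from subgroups of a
  group of exponent \<open>p ^ e\<close>, there is \<open>\<chi> : G \<rightarrow> \<int>/p^e\<close> vanishing on \<open>\<langle>u\<rangle>\<close> with
  \<open>\<chi>(z) = t\<close>. The map \<open>v \<mapsto> v \<cdot> u ^ \<chi>(v)\<close> is then an automorphism sending \<open>z\<close> to
  \<open>z \<cdot> u ^ t\<close>, hence \<open>u ^ t \<in> K\<close>.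
\<close>

text \<open>A homomorphism \<open>S \<rightarrow> \<int>/q\<close> is represented by an integer-valued function that is additive
  modulo \<open>q\<close> on \<open>S\<close>.\<close>

definition hom_mod_on :: "('a, 'b) monoid_scheme \<Rightarrow> nat \<Rightarrow> 'a set \<Rightarrow> ('a \<Rightarrow> int) \<Rightarrow> bool" where
  "hom_mod_on G q S f \<longleftrightarrow> (\<forall>a\<in>S. \<forall>b\<in>S. [f (a \<otimes>\<^bsub>G\<^esub> b) = f a + f b] (mod int q))"

context group
begin

lemma hom_mod_on_one:
  assumes "subgroup S G" "hom_mod_on G q S f"
  shows "[f \<one> = 0] (mod int q)"
proof -
  have "[f (\<one> \<otimes> \<one>) = f \<one> + f \<one>] (mod int q)"
    using assms subgroup.one_closed[OF assms(1)] unfolding hom_mod_on_def by blast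
  then have "[f \<one> + f \<one> = f \<one> + 0] (mod int q)" by (simp add: cong_sym)
  then show ?thesis by (simp only: cong_add_lcancel)
qed

lemma hom_mod_on_nat_pow:
  assumes S: "subgroup S G" and f: "hom_mod_on G q S f" and s: "s \<in> S"
  shows "[f (s [^] n) = int n * f s] (mod int q)"
proof (induction n)
  case 0
  then show ?case using hom_mod_on_one[OF S f] by simp
next
  case (Suc n)
  have "s [^] n \<in> S" using subgroup_int_pow_closed[OF S s, of "int n"] by (simp add: int_pow_int)
  then have "[f (s [^] n \<otimes> s) = f (s [^] n) + f s] (mod int q)"
    using f s unfolding hom_mod_on_def by blast
  also have "[f (s [^] n) + f s = int n * f s + f s] (mod int q)"
    using Suc by (rule cong_add) simp
  finally show ?case by (simp add: algebra_simps)
qed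

lemma hom_mod_on_inv:
  assumes S: "subgroup S G" and f: "hom_mod_on G q S f" and s: "s \<in> S"
  shows "[f (inv s) = - f s] (mod int q)"
proof -
  have sc: "s \<in> carrier G" using S s by (rule subgroup.mem_carrier)
  have "[f s + f (inv s) = f \<one>] (mod int q)"
    using f s subgroup.m_inv_closed[OF S s] sc unfolding hom_mod_on_def by (metis r_inv cong_sym)
  also have "[f \<one> = f s + - f s] (mod int q)" using hom_mod_on_one[OF S f] by simp
  finally show ?thesis by (simp only: cong_add_lcancel)
qed

lemma hom_mod_on_int_pow:
  assumes S: "subgroup S G" and f: "hom_mod_on G q S f" and s: "s \<in> S"
  shows "[f (s [^] k) = k * f s] (mod int q)"
proof (cases "k \<ge> 0")
  case True
  then show ?thesis using hom_mod_on_nat_pow[OF assms, of "nat k"] by simp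
next
  case False
  have sc: "s \<in> carrier G" using S s by (rule subgroup.mem_carrier)
  have sk: "s [^] nat (- k) \<in> S"
    using subgroup_int_pow_closed[OF S s, of "int (nat (- k))"] unfolding int_pow_int .
  have "s [^] k = inv (s [^] nat (- k))"
    using False sc by (simp add: int_pow_def2 del: pow_nat)
  then have "[f (s [^] k) = - f (s [^] nat (- k))] (mod int q)"
    using hom_mod_on_inv[OF S f sk] by simp
  also have "[- f (s [^] nat (- k)) = - (int (nat (- k)) * f s)] (mod int q)"
    unfolding cong_minus_minus_iff by (rule hom_mod_on_nat_pow[OF assms])
  finally show ?thesis using False by simp
qed

lemma int_pow_cong:
  assumes x: "x \<in> carrier G" and xq: "x [^] q = \<one>" and ab: "[a = b] (mod int q)"
  shows "x [^] a = x [^] b"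
proof -
  have "int (ord x) dvd int q" using xq pow_eq_id[OF x] by simp
  also have "int q dvd b - a" using ab by (simp add: cong_iff_dvd_diff dvd_diff_commute)
  finally show ?thesis using int_pow_eq[OF x] by simp
qed

lemma int_pow_mem_subgroup_iff_dvd:
  assumes S: "subgroup S G" and g: "g \<in> carrier G" and n: "0 < n" "g [^] (n::nat) \<in> S"
  obtains m :: nat where "0 < m" "\<And>i::int. g [^] i \<in> S \<longleftrightarrow> int m dvd i"
proof -
  define m where "m = (LEAST k::nat. 0 < k \<and> g [^] k \<in> S)"
  have m: "0 < m" "g [^] m \<in> S" using LeastI[of "\<lambda>k. 0 < k \<and> g [^] k \<in> S", OF conjI[OF n]]
    unfolding m_def by auto
  have m_least: "m \<le> k" if "0 < k" "g [^] k \<in> S" for k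
    unfolding m_def using that by (simp add: Least_le)
  have mult_m: "g [^] (int m * k) \<in> S" for k
    using subgroup_int_pow_closed[OF S m(2), of k] g by (simp add: int_pow_pow flip: int_pow_int)
  have "int m dvd i" if i: "g [^] i \<in> S" for i
  proof -
    define r where "r = i mod int m"
    have r: "0 \<le> r" "r < int m" using m(1) unfolding r_def by auto
    have "g [^] r = inv (g [^] (int m * (i div int m))) \<otimes> g [^] i"
      using g by (simp add: inv_solve_left int_pow_mult[symmetric] r_def)
    then have "g [^] nat r \<in> S"
      using S i mult_m r(1) by (simp add: subgroup.m_closed subgroup.m_inv_closed flip: int_pow_int)
    then have "r = 0" using m_least[of "nat r"] r by fastforce
    then show ?thesis unfolding r_def by auto
  qed
  moreover have "g [^] i \<in> S" if "int m dvd i" for i using that mult_m by blast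
  ultimately show thesis using m(1) that by blast
qed

lemma hom_mod_on_linear_on_powers:
  assumes S: "subgroup S G" and f: "hom_mod_on G q S f" and g: "g \<in> carrier G"
    and gq: "g [^] q = \<one>" and q: "0 < q"
  obtains c where "\<And>i::int. g [^] i \<in> S \<Longrightarrow> [f (g [^] i) = i * c] (mod int q)"
proof -
  obtain m where m: "0 < m" and pow_mem: "\<And>i::int. g [^] i \<in> S \<longleftrightarrow> int m dvd i"
    using int_pow_mem_subgroup_iff_dvd[OF S g q] gq subgroup.one_closed[OF S] by auto
  have "int m dvd int q" using pow_mem[of "int q"] gq subgroup.one_closed[OF S] by (simp add: int_pow_int)
  then obtain d where qmd: "int q = int m * d" by blast
  have d: "0 < d" using qmd q m by (metis of_nat_0_less_iff zero_less_mult_pos)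
  define a where "a = f (g [^] int m)"
  have gm: "g [^] int m \<in> S" using pow_mem by simp
  have "(g [^] int m) [^] d = g [^] int q" using g by (simp add: int_pow_pow qmd)
  then have "(g [^] int m) [^] d = \<one>" using gq by (simp add: int_pow_int)
  then have "[f \<one> = d * a] (mod int q)" using hom_mod_on_int_pow[OF S f gm, of d] unfolding a_def by simp
  then have "[d * a = 0] (mod int q)" using cong_trans[OF cong_sym hom_mod_on_one[OF S f]] by blast
  then have "d * int m dvd d * a" unfolding cong_0_iff qmd by (simp only: mult.commute)
  then have "int m dvd a" using d by simp
  then obtain c where a: "a = int m * c" by blast
  have "[f (g [^] i) = i * c] (mod int q)" if "g [^] i \<in> S" for i
  proof -
    have "int m dvd i" using that by (simp only: pow_mem)
    then obtain k where i: "i = int m * k" by (elim dvdE)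
    have "g [^] i = (g [^] int m) [^] k" using g by (simp add: i int_pow_pow)
    then have "[f (g [^] i) = k * a] (mod int q)" using hom_mod_on_int_pow[OF S f gm] unfolding a_def by simp
    then show ?thesis by (simp add: i a algebra_simps)
  qed
  then show thesis by (rule that)
qed

end

context comm_group
begin

lemma mult_int_pow_mult:
  assumes "a \<in> carrier G" "b \<in> carrier G" "g \<in> carrier G"
  shows "(a \<otimes> g [^] (i::int)) \<otimes> (b \<otimes> g [^] (j::int)) = (a \<otimes> b) \<otimes> g [^] (i + j)"
  using assms by (simp add: int_pow_mult m_ac)

lemma subgroup_mult_powers:
  assumes S: "subgroup S G" and g: "g \<in> carrier G"
  shows "subgroup {s \<otimes> g [^] i |s (i::int). s \<in> S} G"
proof (rule subgroupI)
  have Sc: "\<And>s. s \<in> S \<Longrightarrow> s \<in> carrier G" using S by (rule subgroup.mem_carrier)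
  then show "{s \<otimes> g [^] i |s (i::int). s \<in> S} \<subseteq> carrier G" using g by auto
  show "{s \<otimes> g [^] i |s (i::int). s \<in> S} \<noteq> {}" using subgroup.one_closed[OF S] by blast
  fix u v assume "u \<in> {s \<otimes> g [^] i |s (i::int). s \<in> S}" "v \<in> {s \<otimes> g [^] i |s (i::int). s \<in> S}"
  then obtain s s' and i j :: int where s: "s \<in> S" "s' \<in> S" and uv: "u = s \<otimes> g [^] i" "v = s' \<otimes> g [^] j"
    by blast
  have "inv u = inv s \<otimes> g [^] (- i)" using uv Sc s g by (simp add: inv_mult int_pow_neg m_comm)
  then show "inv u \<in> {s \<otimes> g [^] i |s (i::int). s \<in> S}" using subgroup.m_inv_closed[OF S s(1)] by blast
  have "u \<otimes> v = (s \<otimes> s') \<otimes> g [^] (i + j)" using uv Sc s g by (simp add: mult_int_pow_mult)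
  then show "u \<otimes> v \<in> {s \<otimes> g [^] i |s (i::int). s \<in> S}" using subgroup.m_closed[OF S s] by blast
qed

lemma hom_mod_on_adjoin:
  assumes S: "subgroup S G" and g: "g \<in> carrier G" and f: "hom_mod_on G q S f"
    and c: "\<And>i::int. g [^] i \<in> S \<Longrightarrow> [f (g [^] i) = i * c] (mod int q)"
  obtains F where "hom_mod_on G q {s \<otimes> g [^] i |s (i::int). s \<in> S} F"
    and "\<And>s i. s \<in> S \<Longrightarrow> [F (s \<otimes> g [^] (i::int)) = f s + i * c] (mod int q)"
proof -
  have Sc: "\<And>s. s \<in> S \<Longrightarrow> s \<in> carrier G" using S by (rule subgroup.mem_carrier)
  have well_defined: "[f s' + j * c = f s + i * c] (mod int q)"
    if s: "s \<in> S" "s' \<in> S" and eq: "s \<otimes> g [^] i = s' \<otimes> g [^] j" for s s' and i j :: int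
  proof -
    have s': "s' = s \<otimes> g [^] (i - j)"
      using eq Sc s g by (simp add: int_pow_diff m_assoc[symmetric] inv_solve_right)
    then have "g [^] (i - j) = inv s \<otimes> s'" using Sc s g by (simp add: m_assoc[symmetric])
    then have gij: "g [^] (i - j) \<in> S" using S s by (simp add: subgroup.m_closed subgroup.m_inv_closed)
    have "[f s' = f s + f (g [^] (i - j))] (mod int q)"
      using f s gij unfolding s' hom_mod_on_def by blast
    also have "[f s + f (g [^] (i - j)) = f s + (i - j) * c] (mod int q)"
      using c[OF gij] by (rule cong_add_lcancel[THEN iffD2])
    finally have "[f s' + j * c = f s + (i - j) * c + j * c] (mod int q)" by (rule cong_add_rcancel[THEN iffD2])
    then show ?thesis by (simp add: algebra_simps)
  qed
  define rep where "rep u = (SOME (s, i). s \<in> S \<and> u = s \<otimes> g [^] (i::int))" for u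
  define F where "F u = f (fst (rep u)) + snd (rep u) * c" for u
  have F: "[F (s \<otimes> g [^] i) = f s + i * c] (mod int q)" if s: "s \<in> S" for s and i :: int
  proof -
    obtain s' j where "rep (s \<otimes> g [^] i) = (s', j)" by fastforce
    moreover have "(\<lambda>(s', j). s' \<in> S \<and> s \<otimes> g [^] i = s' \<otimes> g [^] (j::int)) (rep (s \<otimes> g [^] i))"
      unfolding rep_def by (rule someI[of _ "(s, i)"]) (simp add: s)
    ultimately show ?thesis unfolding F_def using well_defined[OF s] by auto
  qed
  have "hom_mod_on G q {s \<otimes> g [^] i |s (i::int). s \<in> S} F"
    unfolding hom_mod_on_def
  proof (intro ballI)
    fix u v assume "u \<in> {s \<otimes> g [^] i |s (i::int). s \<in> S}" "v \<in> {s \<otimes> g [^] i |s (i::int). s \<in> S}"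
    then obtain s s' and i j :: int where s: "s \<in> S" "s' \<in> S" and uv: "u = s \<otimes> g [^] i" "v = s' \<otimes> g [^] j"
      by blast
    have "u \<otimes> v = (s \<otimes> s') \<otimes> g [^] (i + j)" using uv Sc s g by (simp add: mult_int_pow_mult)
    then have "[F (u \<otimes> v) = f (s \<otimes> s') + (i + j) * c] (mod int q)"
      using F subgroup.m_closed[OF S s] by simp
    also have "[f (s \<otimes> s') + (i + j) * c = (f s + f s') + (i + j) * c] (mod int q)"
      using f s unfolding hom_mod_on_def by (simp add: cong_add_rcancel)
    also have "(f s + f s') + (i + j) * c = (f s + i * c) + (f s' + j * c)" by (simp add: algebra_simps)
    also have "[\<dots> = F u + F v] (mod int q)" using F[OF s(1)] F[OF s(2)] uv by (simp add: cong_add cong_sym)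
    finally show "[F (u \<otimes> v) = F u + F v] (mod int q)" .
  qed
  then show thesis using F by (rule that)
qed

lemma hom_mod_on_extend:
  assumes fin: "finite (carrier G)" and exp: "\<And>u. u \<in> carrier G \<Longrightarrow> u [^] q = \<one>" and q: "0 < q"
    and "subgroup S G" and "hom_mod_on G q S f"
  shows "\<exists>F. hom_mod_on G q (carrier G) F \<and> (\<forall>s\<in>S. [F s = f s] (mod int q))"
  using assms(4,5)
proof (induction "card (carrier G - S)" arbitrary: S f rule: less_induct)
  case less
  note S = less.prems(1) and f = less.prems(2)
  show ?case
  proof (cases "S = carrier G")
    case True
    then show ?thesis using f by (intro exI[of _ f]) auto
  next
    case False
    then obtain g where g: "g \<in> carrier G" "g \<notin> S" using subgroup.subset[OF S] by blast
    obtain c where c: "\<And>i::int. g [^] i \<in> S \<Longrightarrow> [f (g [^] i) = i * c] (mod int q)"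
      using hom_mod_on_linear_on_powers[OF S f g(1) exp[OF g(1)] q] by blast
    define T where "T = {s \<otimes> g [^] i |s (i::int). s \<in> S}"
    obtain F where F: "hom_mod_on G q T F" and F_mult: "\<And>s i. s \<in> S \<Longrightarrow> [F (s \<otimes> g [^] (i::int)) = f s + i * c] (mod int q)"
      using hom_mod_on_adjoin[OF S g(1) f c] unfolding T_def by blast
    have T: "subgroup T G" unfolding T_def using S g(1) by (rule subgroup_mult_powers)
    have ST: "S \<subseteq> T"
    proof
      fix s assume "s \<in> S"
      then show "s \<in> T" using subgroup.mem_carrier[OF S] unfolding T_def by (force intro: exI[of _ "0::int"])
    qed
    have "g \<in> T" using g(1) subgroup.one_closed[OF S] unfolding T_def by (force intro: exI[of _ "1::int"])
    then have "card (carrier G - T) < card (carrier G - S)"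
      using fin g ST by (intro psubset_card_mono) auto
    then obtain F' where F': "hom_mod_on G q (carrier G) F'" "\<forall>t\<in>T. [F' t = F t] (mod int q)"
      using less.hyps T F by blast
    have "[F' s = f s] (mod int q)" if s: "s \<in> S" for s
    proof -
      have "[F' s = F s] (mod int q)" using F' ST s by blast
      also have "[F s = f s] (mod int q)"
        using F_mult[OF s, of 0] subgroup.mem_carrier[OF S s] by simp
      finally show ?thesis .
    qed
    then show ?thesis using F' by blast
  qed
qed

lemma hom_mod_on_separating:
  assumes fin: "finite (carrier G)" and exp: "\<And>u. u \<in> carrier G \<Longrightarrow> u [^] q = \<one>" and q: "0 < q"
    and S: "subgroup S G" and g: "g \<in> carrier G"
    and c: "\<And>i::int. g [^] i \<in> S \<Longrightarrow> [i * c = 0] (mod int q)"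
  obtains \<chi> where "hom_mod_on G q (carrier G) \<chi>" "\<And>s. s \<in> S \<Longrightarrow> [\<chi> s = 0] (mod int q)"
    "[\<chi> g = c] (mod int q)"
proof -
  have "hom_mod_on G q S (\<lambda>_. 0)" unfolding hom_mod_on_def by simp
  moreover have "\<And>i::int. g [^] i \<in> S \<Longrightarrow> [0 = i * c] (mod int q)" using c by (simp add: cong_sym)
  ultimately obtain F where F: "hom_mod_on G q {s \<otimes> g [^] i |s (i::int). s \<in> S} F"
    and F_mult: "\<And>s i. s \<in> S \<Longrightarrow> [F (s \<otimes> g [^] (i::int)) = 0 + i * c] (mod int q)"
    using hom_mod_on_adjoin[OF S g] by blast
  obtain \<chi> where \<chi>: "hom_mod_on G q (carrier G) \<chi>"
    and \<chi>_F: "\<And>u. u \<in> {s \<otimes> g [^] i |s (i::int). s \<in> S} \<Longrightarrow> [\<chi> u = F u] (mod int q)"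
    using hom_mod_on_extend[OF fin exp q subgroup_mult_powers[OF S g] F] by blast
  have \<chi>_mult: "[\<chi> (s \<otimes> g [^] i) = i * c] (mod int q)" if "s \<in> S" for s i
    using cong_trans[OF \<chi>_F F_mult[OF that]] that by auto
  show thesis
  proof (rule that[OF \<chi>])
    show "[\<chi> s = 0] (mod int q)" if "s \<in> S" for s
      using \<chi>_mult[OF that, of 0] subgroup.mem_carrier[OF S that] by simp
    show "[\<chi> g = c] (mod int q)" using \<chi>_mult[OF subgroup.one_closed[OF S], of 1] g by simp
  qed
qed

end

context group
begin

lemma prime_order_int_pow_mem:
  assumes H: "subgroup H G" and z: "z \<in> carrier G" and p: "Factorial_Ring.prime p"
    and zp: "z [^] p = \<one>" and zi: "z [^] (i::int) \<in> H" and i: "\<not> int p dvd i"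
  shows "z \<in> H"
proof -
  have "coprime (int p) i" using p i by (simp add: prime_imp_coprime)
  then obtain a b where "a * i + b * int p = 1"
    using bezout_int[of i "int p"] by (auto simp: gcd.commute coprime_iff_gcd_eq_1)
  then have "[i * a = 1] (mod int p)" by (metis cong_iff_lin mult.commute)
  then have "(z [^] i) [^] a = z [^] (1::int)" using z zp by (simp add: int_pow_pow int_pow_cong)
  then show ?thesis using subgroup_int_pow_closed[OF H zi, of a] z by simp
qed

lemma pow_mem_of_order_p_power_mem:
  assumes p: "Factorial_Ring.prime p" and x: "x \<in> carrier G" "ord x = p * t"
    and K: "subgroup K G" and z: "z \<in> K" "z \<noteq> \<one>" "z [^] p = \<one>"
    and z_pow: "z \<in> range (\<lambda>i::int. x [^] i)"
  shows "x [^] t \<in> K"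
proof -
  obtain k where zk: "z = x [^] (k::int)" using z_pow by blast
  have "x [^] (k * int p) = \<one>" using z(3) x(1) by (simp add: zk int_pow_pow flip: int_pow_int)
  then have "int t * int p dvd k * int p" using int_pow_eq_id[OF x(1)] x(2) by (simp add: mult.commute)
  then obtain s where ks: "k = int t * s" using p by (auto simp: prime_gt_0_nat)
  define y where "y = x [^] t"
  have y: "y \<in> carrier G" unfolding y_def using x(1) by simp
  have "y [^] p = \<one>" unfolding y_def using x by (simp add: nat_pow_pow mult.commute flip: x(2))
  moreover have "y [^] s \<in> K" using z(1) x(1) by (simp add: zk ks y_def int_pow_pow flip: int_pow_int)
  moreover have "\<not> int p dvd s"
  proof
    assume "int p dvd s"
    then have "int (ord x) dvd k" using x(2) by (simp add: ks mult.commute mult_dvd_mono)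
    then show False using z(2) int_pow_eq_id[OF x(1)] zk by simp
  qed
  ultimately show ?thesis unfolding y_def[symmetric] using prime_order_int_pow_mem[OF K y p] by blast
qed

lemma ord_prime_power:
  assumes p: "Factorial_Ring.prime p" and n: "order G = p ^ n" and u: "u \<in> carrier G"
  obtains k where "ord u = p ^ k"
  using ord_dvd_group_order[OF u] divides_primepow_nat[OF p] n by auto

lemma exists_max_prime_power_order:
  assumes fin: "finite (carrier G)" and p: "Factorial_Ring.prime p" and n: "order G = p ^ n"
  obtains x e where "x \<in> carrier G" "ord x = p ^ e" "\<forall>u\<in>carrier G. ord u dvd p ^ e"
proof -
  have "\<exists>x. x \<in> carrier G \<and> (\<forall>u. u \<in> carrier G \<longrightarrow> ord u \<le> ord x)"
    by (rule ex_has_greatest_nat[of _ \<one> _ "Suc (order G)"]) (auto simp: ord_le_group_order[OF fin] less_Suc_eq_le)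
  then obtain x where x: "x \<in> carrier G" and x_max: "\<And>u. u \<in> carrier G \<Longrightarrow> ord u \<le> ord x"
    by blast
  obtain e where e: "ord x = p ^ e" using ord_prime_power[OF p n x] .
  have "\<forall>u\<in>carrier G. ord u dvd p ^ e"
  proof
    fix u assume u: "u \<in> carrier G"
    obtain k where k: "ord u = p ^ k" using ord_prime_power[OF p n u] .
    then have "p ^ k \<le> p ^ e" using x_max[OF u] e by simp
    then have "k \<le> e" using prime_gt_1_nat[OF p] by simp
    then show "ord u dvd p ^ e" using k by (simp add: le_imp_power_dvd)
  qed
  then show thesis by (rule that[OF x e])
qed

lemma subgroup_exists_elem_order_prime:
  assumes p: "Factorial_Ring.prime p" and n: "order G = p ^ n"
    and K: "subgroup K G" "K \<noteq> {\<one>}"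
  obtains z where "z \<in> K" "z \<noteq> \<one>" "z [^] p = \<one>"
proof -
  obtain w where w: "w \<in> K" "w \<noteq> \<one>" using K subgroup.one_closed by blast
  have wc: "w \<in> carrier G" using K(1) w(1) by (rule subgroup.mem_carrier)
  obtain k where k: "ord w = p ^ k" using ord_prime_power[OF p n wc] .
  have "k \<noteq> 0" using k w(2) ord_eq_1[OF wc] by (metis power_0)
  then have pk: "p ^ (k - 1) * p = ord w" using k by (cases k) (simp_all add: mult.commute)
  show thesis
  proof (rule that)
    show "w [^] p ^ (k - 1) \<in> K"
      using subgroup_int_pow_closed[OF K(1) w(1), of "int (p ^ (k - 1))"] unfolding int_pow_int .
    show "(w [^] p ^ (k - 1)) [^] p = \<one>" using wc by (simp only: nat_pow_pow pk pow_ord_eq_1)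
    show "w [^] p ^ (k - 1) \<noteq> \<one>"
      using pow_eq_id[OF wc] power_dvd_imp_le[of p k "k - 1"] prime_gt_1_nat[OF p] \<open>k \<noteq> 0\<close> k by auto
  qed
qed

end

context comm_group
begin

lemma int_pow_hom_mod_on_hom:
  assumes x: "x \<in> carrier G" "x [^] q = \<one>" and F: "hom_mod_on G q (carrier G) F"
  shows "(\<lambda>u. x [^] F u) \<in> hom G G"
proof (rule homI)
  fix u v assume "u \<in> carrier G" "v \<in> carrier G"
  then have "x [^] F (u \<otimes> v) = x [^] (F u + F v)"
    using F unfolding hom_mod_on_def by (intro int_pow_cong[OF x]) auto
  then show "x [^] F (u \<otimes> v) = x [^] F u \<otimes> x [^] F v" using x by (simp add: int_pow_mult)
qed (use x in simp)

lemma unipotent_iso: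
  assumes E: "E \<in> hom G G" and EE: "\<And>u. u \<in> carrier G \<Longrightarrow> E (E u) = \<one>"
  shows "(\<lambda>u. u \<otimes> E u) \<in> iso G G"
proof -
  have Ec: "E u \<in> carrier G" if "u \<in> carrier G" for u using E that unfolding hom_def by blast
  have "(\<lambda>u. u \<otimes> E u) \<in> hom G G"
  proof (rule homI)
    fix u v assume "u \<in> carrier G" "v \<in> carrier G"
    then show "u \<otimes> v \<otimes> E (u \<otimes> v) = u \<otimes> E u \<otimes> (v \<otimes> E v)"
      using Ec by (simp add: hom_mult[OF E] m_ac)
  qed (use Ec in simp)
  moreover have "bij_betw (\<lambda>u. u \<otimes> E u) (carrier G) (carrier G)"
  proof (rule bij_betw_byWitness[where f' = "\<lambda>v. v \<otimes> inv (E v)"])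
    have "group_hom G G E" using E by (simp add: group_hom_def group_hom_axioms_def)
    then have E_inv: "E (v \<otimes> inv (E v)) = E v" if "v \<in> carrier G" for v
      using that Ec by (simp add: hom_mult[OF E] group_hom.hom_inv EE)
    show "\<forall>u\<in>carrier G. u \<otimes> E u \<otimes> inv (E (u \<otimes> E u)) = u"
      using Ec by (simp add: hom_mult[OF E] EE m_assoc)
    show "\<forall>v\<in>carrier G. v \<otimes> inv (E v) \<otimes> E (v \<otimes> inv (E v)) = v"
      using Ec E_inv by (simp add: m_assoc)
  qed (use Ec in auto)
  ultimately show ?thesis unfolding iso_def by blast
qed

lemma characteristic_nat_pow_image:
  "characteristic_subgroup ((\<lambda>u. u [^] (n::nat)) ` carrier G) G"
  unfolding characteristic_subgroup_def
proof (intro conjI ballI)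
  have "(\<lambda>u. u [^] n) \<in> hom G G" by (rule homI) (simp_all add: nat_pow_distrib)
  then show "subgroup ((\<lambda>u. u [^] n) ` carrier G) G"
    by (intro group_hom.img_is_subgroup) (simp add: group_hom_def group_hom_axioms_def)
  fix \<phi> assume "\<phi> \<in> iso G G"
  then have \<phi>: "\<phi> \<in> hom G G" "\<phi> ` carrier G = carrier G" by (auto simp: iso_iff)
  have "\<phi> ` (\<lambda>u. u [^] n) ` carrier G = (\<lambda>u. \<phi> u [^] n) ` carrier G"
    unfolding image_image using hom_nat_pow[OF \<phi>(1) _ is_group is_group] by (intro image_cong) auto
  also have "\<dots> = (\<lambda>u. u [^] n) ` \<phi> ` carrier G" by (simp add: image_image)
  also have "\<dots> = (\<lambda>u. u [^] n) ` carrier G" by (simp only: \<phi>(2))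
  finally show "\<phi> ` (\<lambda>u. u [^] n) ` carrier G = (\<lambda>u. u [^] n) ` carrier G" .
qed

lemma characteristic_subgroup_contains_pow:
  assumes fin: "finite (carrier G)" and p: "Factorial_Ring.prime p"
    and exp: "\<And>u. u \<in> carrier G \<Longrightarrow> u [^] (p * t) = \<one>"
    and x: "x \<in> carrier G" "ord x = p * t"
    and K: "characteristic_subgroup K G" and z: "z \<in> K" "z \<noteq> \<one>" "z [^] p = \<one>"
  shows "x [^] t \<in> K"
proof (cases "z \<in> range (\<lambda>i::int. x [^] i)")
  case True
  then show ?thesis using K pow_mem_of_order_p_power_mem[OF p x _ z] unfolding characteristic_subgroup_def by blast
next
  case False
  define q where "q = p * t"
  define Cyc where "Cyc = range (\<lambda>i::int. x [^] i)"
  have Ks: "subgroup K G" using K unfolding characteristic_subgroup_def by blast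
  have zc: "z \<in> carrier G" using Ks z(1) by (rule subgroup.mem_carrier)
  have Cyc: "subgroup Cyc G" unfolding Cyc_def using x(1) by (rule subgroup_of_powers)
  have q: "0 < q" using ord_ge_1[OF fin x(1)] x(2) unfolding q_def by simp
  have exp_q: "\<And>u. u \<in> carrier G \<Longrightarrow> u [^] q = \<one>" unfolding q_def by (rule exp)
  have xq: "x [^] q = \<one>" using exp_q x(1) .
  have "[i * int t = 0] (mod int q)" if "z [^] i \<in> Cyc" for i
  proof -
    have "int p dvd i" using prime_order_int_pow_mem[OF Cyc zc p z(3) that] False unfolding Cyc_def by blast
    then show ?thesis by (auto simp: q_def cong_0_iff)
  qed
  then obtain \<chi> where \<chi>: "hom_mod_on G q (carrier G) \<chi>" and \<chi>_Cyc: "\<And>s. s \<in> Cyc \<Longrightarrow> [\<chi> s = 0] (mod int q)"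
    and \<chi>_z: "[\<chi> z = int t] (mod int q)"
    using hom_mod_on_separating[OF fin exp_q q Cyc zc] by blast
  define E where "E u = x [^] \<chi> u" for u
  have E: "E \<in> hom G G" unfolding E_def using int_pow_hom_mod_on_hom[OF x(1) xq \<chi>] .
  have "E (E u) = \<one>" for u
    using int_pow_cong[OF x(1) xq \<chi>_Cyc] x(1) unfolding E_def Cyc_def by simp
  then have "(\<lambda>u. u \<otimes> E u) \<in> iso G G" using E by (intro unipotent_iso)
  then have "z \<otimes> E z \<in> K" using K z(1) unfolding characteristic_subgroup_def by blast
  moreover have "E z = x [^] t" using int_pow_cong[OF x(1) xq \<chi>_z] unfolding E_def by (simp add: int_pow_int)
  ultimately have "inv z \<otimes> (z \<otimes> x [^] t) \<in> K" using Ks z(1) by (simp add: subgroup.m_closed subgroup.m_inv_closed)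
  then show ?thesis using zc x(1) by (simp add: m_assoc[symmetric])
qed

lemma nat_pow_image_subset_characteristic:
  assumes fin: "finite (carrier G)" and p: "Factorial_Ring.prime p" and n: "order G = p ^ n"
    and ord_dvd: "\<forall>u\<in>carrier G. ord u dvd p ^ Suc e"
    and K: "characteristic_subgroup K G" "K \<noteq> {\<one>}"
  shows "(\<lambda>u. u [^] p ^ e) ` carrier G \<subseteq> K"
proof
  have Ks: "subgroup K G" using K(1) unfolding characteristic_subgroup_def by blast
  obtain z where z: "z \<in> K" "z \<noteq> \<one>" "z [^] p = \<one>"
    using subgroup_exists_elem_order_prime[OF p n Ks K(2)] .
  have exp: "\<And>u. u \<in> carrier G \<Longrightarrow> u [^] (p * p ^ e) = \<one>" using ord_dvd pow_eq_id by simp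
  fix v assume "v \<in> (\<lambda>u. u [^] p ^ e) ` carrier G"
  then obtain u where u: "u \<in> carrier G" "v = u [^] p ^ e" by blast
  show "v \<in> K"
  proof (cases "u [^] p ^ e = \<one>")
    case True
    then show ?thesis using u subgroup.one_closed[OF Ks] by simp
  next
    case False
    obtain k where k: "ord u = p ^ k" using ord_prime_power[OF p n u(1)] .
    have "p ^ k dvd p ^ Suc e" using ord_dvd u(1) by (simp flip: k)
    then have "k \<le> Suc e" using power_dvd_imp_le prime_gt_1_nat[OF p] by blast
    moreover have "\<not> k \<le> e" using False pow_eq_id[OF u(1)] k le_imp_power_dvd by auto
    ultimately have "ord u = p * p ^ e" using k by (simp add: le_Suc_eq)
    then show ?thesis using characteristic_subgroup_contains_pow[OF fin p exp u(1) _ K(1) z] u by simp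
  qed
qed

lemma minimal_nontrivial_characteristic_subgroup:
  assumes fin: "finite (carrier G)" and p: "Factorial_Ring.prime p" and n: "order G = p ^ n"
    and nontrivial: "carrier G \<noteq> {\<one>}"
  shows "\<exists>H. characteristic_subgroup H G \<and> H \<noteq> {\<one>} \<and>
           (\<forall>K. characteristic_subgroup K G \<and> K \<noteq> {\<one>} \<longrightarrow> H \<subseteq> K)"
proof -
  obtain x e' where x: "x \<in> carrier G" "ord x = p ^ e'" and ord_dvd: "\<forall>u\<in>carrier G. ord u dvd p ^ e'"
    using exists_max_prime_power_order[OF fin p n] .
  have "e' \<noteq> 0"
  proof
    assume "e' = 0"
    then have "\<forall>u\<in>carrier G. u = \<one>" using ord_dvd ord_eq_1 by simp
    then show False using nontrivial by blast
  qed
  then obtain e where e: "e' = Suc e" using not0_implies_Suc by blast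
  have "x [^] p ^ e \<noteq> \<one>"
    using pow_eq_id[OF x(1)] x(2) e power_dvd_imp_le[of p "Suc e" e] prime_gt_1_nat[OF p] by auto
  then have "(\<lambda>u. u [^] p ^ e) ` carrier G \<noteq> {\<one>}" using x(1) by blast
  then show ?thesis
    using characteristic_nat_pow_image nat_pow_image_subset_characteristic[OF fin p n] ord_dvd e by blast
qed

end

theorem mainTheorem13:
  fixes G :: "('a, 'b) monoid_scheme" and p :: nat
  assumes "comm_group G"
    and "finite (carrier G)"
    and "Factorial_Ring.prime p"
    and "\<exists>n. order G = p ^ n"
    and "carrier G \<noteq> {\<one>\<^bsub>G\<^esub>}"
  shows "\<exists>H. characteristic_subgroup H G \<and> H \<noteq> {\<one>\<^bsub>G\<^esub>} \<and>
           (\<forall>K. characteristic_subgroup K G \<and> K \<noteq> {\<one>\<^bsub>G\<^esub>} \<longrightarrow> H \<subseteq> K)"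
proof -
  interpret comm_group G by (rule assms(1))
  obtain n where "order G = p ^ n" using assms(4) by blast
  then show ?thesis using minimal_nontrivial_characteristic_subgroup assms(2,3,5) by blast
qed

end
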